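(* Let $\mathcal{G}=(\Delta,E)$ be a connected undirected graph, let $K=(k_{ij})\in\mathcal{M}^+(\mathcal{G})$, and let $C$ be a maximal clique of $\mathcal{G}$. Let $\mathcal{G}^*$ be a chordal extension of $\mathcal{G}$, and let $C^*_1,\dots,C^*_M$ be a perfect sequence of the maximal cliques of $\mathcal{G}^*$ with $C\subseteq C^*_1$. Put $S^*_m:=C^*_m\cap(C^*_1\cup\dots\cup C^*_{m-1})$ for $m=2,\dots,M$, $R^*_1:=C^*_1\setminus C$ and $R^*_m:=C^*_m\setminus S^*_m$ for $m=2,\dots,M$. Let $\delta_1,\dots,\delta_N$ ($N=|\Delta\setminus C|$) be an enumeration of $\Delta\setminus C$ that lists first all vertices of $R^*_M$ (in any order), then all vertices of $R^*_{M-1}$, and so on, ending with the vertices of $R^*_1$. Define symmetric matrices $K^{(0)}:=K$ and, for $i=1,\dots,N$, with $\delta:=\delta_i$, $m$ the index with $\delta\in R^*_m$, and $Q:=C^*_m\setminus\{\delta_1,\dots,\delta_i\}$, let $K^{(i)}$ be obtained from $K^{(i-1)}=(k^{(i-1)}_{ab})$ by replacing the block indexed by $Q\times Q$ with $$K^{(i-1)}_{QQ}-\bigl(k^{(i-1)}_{\delta\delta}\bigr)^{-1}K^{(i-1)}_{Q\delta}K^{(i-1)}_{\delta Q},$$ all other entries unchanged. Then $k^{(i-1)}_{\delta_i\delta_i}>0$ for every $i$ (so the procedure is well defined), and $$K^{(N)}_{CC}=\bigl((K^{-1})_{CC}\bigr)^{-1}.$$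
   Context: For a graph $\mathcal{G}=(\Delta,E)$, $\mathcal{M}^+(\mathcal{G})$ denotes the set of $|\Delta|\times|\Delta|$ real symmetric positive definite matrices $K=(k_{ij})$ with $k_{ij}=0$ whenever $i\neq j$ and $\{i,j\}\notin E$. For a matrix $A$ indexed by $\Delta$ and subsets $\Delta_1,\Delta_2\subseteq\Delta$, $A_{\Delta_1\Delta_2}$ denotes the submatrix with rows in $\Delta_1$ and columns in $\Delta_2$; $(K^{-1})_{CC}$ is the $C\times C$ submatrix of the inverse of $K$. A chordal extension of $\mathcal{G}$ is a chordal graph on the same vertex set $\Delta$ whose edge set contains $E$. A sequence $C^*_1,\dots,C^*_M$ of all maximal cliques of a chordal graph is a perfect sequence if for every $m=2,\dots,M$ there is $m'<m$ with $C^*_{m'}\supseteq C^*_m\cap(C^*_1\cup\dots\cup C^*_{m-1})$. A clique is a set of pairwise adjacent vertices. *)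

theory Defs
  imports Complex_Main
begin

definition graph :: "'v set \<Rightarrow> 'v set set \<Rightarrow> bool" where
  "graph D E \<longleftrightarrow> finite D \<and> (\<forall>e\<in>E. \<exists>a b. e = {a, b} \<and> a \<noteq> b \<and> a \<in> D \<and> b \<in> D)"

definition adj :: "'v set set \<Rightarrow> 'v \<Rightarrow> 'v \<Rightarrow> bool" where
  "adj E a b \<longleftrightarrow> {a, b} \<in> E"

definition connected_graph :: "'v set \<Rightarrow> 'v set set \<Rightarrow> bool" where
  "connected_graph D E \<longleftrightarrow>
     (\<forall>a\<in>D. \<forall>b\<in>D. (a, b) \<in> {(x, y). adj E x y}\<^sup>*)"

definition clique :: "'v set \<Rightarrow> 'v set set \<Rightarrow> 'v set \<Rightarrow> bool" where
  "clique D E C \<longleftrightarrow> C \<subseteq> D \<and> (\<forall>a\<in>C. \<forall>b\<in>C. a \<noteq> b \<longrightarrow> adj E a b)"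

definition maximal_clique :: "'v set \<Rightarrow> 'v set set \<Rightarrow> 'v set \<Rightarrow> bool" where
  "maximal_clique D E C \<longleftrightarrow> clique D E C \<and> (\<forall>C'. clique D E C' \<and> C \<subseteq> C' \<longrightarrow> C' = C)"

definition long_cycle :: "'v set \<Rightarrow> 'v set set \<Rightarrow> 'v list \<Rightarrow> bool" where
  "long_cycle D E vs \<longleftrightarrow> length vs \<ge> 4 \<and> distinct vs \<and> set vs \<subseteq> D \<and>
     (\<forall>i < length vs. adj E (vs ! i) (vs ! ((i + 1) mod length vs)))"

definition has_chord :: "'v set set \<Rightarrow> 'v list \<Rightarrow> bool" where
  "has_chord E vs \<longleftrightarrow> (\<exists>i < length vs. \<exists>j < length vs.
      i \<noteq> j \<and> j \<noteq> (i + 1) mod length vs \<and> i \<noteq> (j + 1) mod length vs \<and>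
      adj E (vs ! i) (vs ! j))"

definition chordal :: "'v set \<Rightarrow> 'v set set \<Rightarrow> bool" where
  "chordal D E \<longleftrightarrow> graph D E \<and> (\<forall>vs. long_cycle D E vs \<longrightarrow> has_chord E vs)"

definition chordal_extension :: "'v set \<Rightarrow> 'v set set \<Rightarrow> 'v set set \<Rightarrow> bool" where
  "chordal_extension D E E' \<longleftrightarrow> chordal D E' \<and> E \<subseteq> E'"

definition perfect_sequence :: "'v set \<Rightarrow> 'v set set \<Rightarrow> 'v set list \<Rightarrow> bool" where
  "perfect_sequence D E Cs \<longleftrightarrow> distinct Cs \<and> set Cs = {C. maximal_clique D E C} \<and>
     (\<forall>m. 1 \<le> m \<and> m < length Cs \<longrightarrow>
        (\<exists>m' < m. Cs ! m' \<supseteq> Cs ! m \<inter> (\<Union>j<m. Cs ! j)))"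

(* square matrices indexed by D are functions 'v => 'v => real (entries outside D irrelevant) *)
type_synonym 'v mat = "'v \<Rightarrow> 'v \<Rightarrow> real"

definition pos_def_on :: "'v set \<Rightarrow> 'v mat \<Rightarrow> bool" where
  "pos_def_on D K \<longleftrightarrow> (\<forall>a\<in>D. \<forall>b\<in>D. K a b = K b a) \<and>
     (\<forall>x :: 'v \<Rightarrow> real. (\<forall>v. v \<notin> D \<longrightarrow> x v = 0) \<longrightarrow> (\<exists>v. x v \<noteq> 0) \<longrightarrow>
        (\<Sum>a\<in>D. \<Sum>b\<in>D. x a * K a b * x b) > 0)"

definition M_plus :: "'v set \<Rightarrow> 'v set set \<Rightarrow> 'v mat set" where
  "M_plus D E = {K. pos_def_on D K \<and>
     (\<forall>a\<in>D. \<forall>b\<in>D. a \<noteq> b \<and> \<not> adj E a b \<longrightarrow> K a b = 0)}"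

definition inv_on :: "'v set \<Rightarrow> 'v mat \<Rightarrow> 'v mat" where
  "inv_on I A = (THE B. (\<forall>a b. a \<notin> I \<or> b \<notin> I \<longrightarrow> B a b = 0) \<and>
      (\<forall>a\<in>I. \<forall>b\<in>I. (\<Sum>c\<in>I. A a c * B c b) = (if a = b then 1 else 0)))"

definition sub_on :: "'v set \<Rightarrow> 'v mat \<Rightarrow> 'v mat" where
  "sub_on I A = (\<lambda>a b. if a \<in> I \<and> b \<in> I then A a b else 0)"

definition elim_step :: "'v set \<Rightarrow> 'v \<Rightarrow> 'v mat \<Rightarrow> 'v mat" where
  "elim_step Q d A = (\<lambda>a b. if a \<in> Q \<and> b \<in> Q then A a b - A a d * A d b / A d d else A a b)"

(* S*_m (0-indexed: m >= 1) *)
definition sep_set :: "'v set list \<Rightarrow> nat \<Rightarrow> 'v set" where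
  "sep_set Cs m = Cs ! m \<inter> (\<Union>j<m. Cs ! j)"

(* R*_1 = C*_1 - C,  R*_m = C*_m - S*_m  (0-indexed) *)
definition res_set :: "'v set \<Rightarrow> 'v set list \<Rightarrow> nat \<Rightarrow> 'v set" where
  "res_set C Cs m = (if m = 0 then Cs ! 0 - C else Cs ! m - sep_set Cs m)"

definition res_idx :: "'v set \<Rightarrow> 'v set list \<Rightarrow> 'v \<Rightarrow> nat" where
  "res_idx C Cs v = (THE m. m < length Cs \<and> v \<in> res_set C Cs m)"

end

theory Submission
  imports Defs
begin

(* Write P = K^-1.  Eliminating a pivot d from a symmetric positive definite matrix A by
   the Schur complement A - (A_dd)^-1 A_.d A_d. keeps it positive definite, and if A inverts
   the block of P indexed by the current vertex set V, the complement inverts the block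
   indexed by V - {d}.  Starting from K on D and eliminating ds ! 0, ds ! 1, ... we reach
   the vertex set C, so the final matrix is ((K^-1)_CC)^-1.

   The procedure in the theorem only updates the block Q = C*_m - {eliminated vertices}.
   This is still the full Schur complement because the matrices keep the zero pattern of
   the chordal extension, and by the running intersection property of the perfect
   sequence and the order of the enumeration every remaining neighbour of the pivot lies
   in C*_m; since C*_m is a clique, no fill-in arises and the pattern is preserved. *)

definition right_inverse_on :: "'v set \<Rightarrow> 'v mat \<Rightarrow> 'v mat \<Rightarrow> bool" where
  "right_inverse_on I A B \<longleftrightarrow>
     (\<forall>a\<in>I. \<forall>b\<in>I. (\<Sum>c\<in>I. A a c * B c b) = (if a = b then 1 else 0))"

definition schur :: "'v \<Rightarrow> 'v mat \<Rightarrow> 'v mat" where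
  "schur d A = (\<lambda>a b. A a b - A a d * A d b / A d d)"

definition quad_form :: "'v set \<Rightarrow> 'v mat \<Rightarrow> ('v \<Rightarrow> real) \<Rightarrow> real" where
  "quad_form V A x = (\<Sum>a\<in>V. \<Sum>b\<in>V. x a * A a b * x b)"

lemma pos_def_on_iff:
  "pos_def_on V A \<longleftrightarrow> (\<forall>a\<in>V. \<forall>b\<in>V. A a b = A b a) \<and>
     (\<forall>x. (\<forall>v. v \<notin> V \<longrightarrow> x v = 0) \<longrightarrow> (\<exists>v. x v \<noteq> 0) \<longrightarrow> quad_form V A x > 0)"
  unfolding pos_def_on_def quad_form_def ..

lemma pos_def_on_cong:
  assumes "\<forall>a\<in>V. \<forall>b\<in>V. A a b = B a b"
  shows "pos_def_on V A = pos_def_on V B"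
  using assms unfolding pos_def_on_def by (auto cong: sum.cong)

lemma right_inverse_on_cong:
  assumes "\<forall>a\<in>I. \<forall>b\<in>I. A a b = A' a b" and "\<forall>a\<in>I. \<forall>b\<in>I. B a b = B' a b"
  shows "right_inverse_on I A B = right_inverse_on I A' B'"
  using assms unfolding right_inverse_on_def by (auto cong: sum.cong)

lemma sum_kronecker_right:
  "finite V \<Longrightarrow> b \<in> V \<Longrightarrow> (\<Sum>c\<in>V. f c * (if c = b then 1 else 0)) = (f b :: real)"
  by (simp add: if_distrib[of "\<lambda>t. _ * t"] cong: if_cong)

lemma sum_kronecker_left:
  "finite V \<Longrightarrow> a \<in> V \<Longrightarrow> (\<Sum>c\<in>V. (if a = c then 1 else 0) * f c) = (f a :: real)"
  by (simp add: if_distrib[of "\<lambda>t. t * _"] cong: if_cong)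

lemma sum_product_assoc:
  "(\<Sum>c\<in>V. (f c :: real) * (\<Sum>e\<in>W. g c e * h e)) = (\<Sum>e\<in>W. (\<Sum>c\<in>V. f c * g c e) * h e)"
  unfolding sum_distrib_left sum_distrib_right by (subst sum.swap) (simp add: mult.assoc)

lemma right_inverse_eq_left_inverse:
  assumes fin: "finite I" and AB: "right_inverse_on I A B" and LA: "right_inverse_on I L A"
    and a: "a \<in> I" and b: "b \<in> I"
  shows "B a b = L a b"
proof -
  have "B a b = (\<Sum>c\<in>I. (if a = c then 1 else 0) * B c b)"
    using sum_kronecker_left[OF fin a] by simp
  also have "\<dots> = (\<Sum>c\<in>I. (\<Sum>e\<in>I. L a e * A e c) * B c b)"
    using LA a unfolding right_inverse_on_def by (intro sum.cong) auto
  also have "\<dots> = (\<Sum>e\<in>I. L a e * (\<Sum>c\<in>I. A e c * B c b))"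
    by (rule sum_product_assoc[symmetric])
  also have "\<dots> = (\<Sum>e\<in>I. L a e * (if e = b then 1 else 0))"
    using AB b unfolding right_inverse_on_def by (intro sum.cong) auto
  also have "\<dots> = L a b" using sum_kronecker_right[OF fin b] .
  finally show ?thesis .
qed

lemma right_inverse_transpose:
  assumes sym: "\<forall>a\<in>I. \<forall>b\<in>I. A a b = A b a" and AB: "right_inverse_on I A B"
  shows "right_inverse_on I (\<lambda>a b. B b a) A"
  unfolding right_inverse_on_def
proof (intro ballI)
  fix a b assume a: "a \<in> I" and b: "b \<in> I"
  have "(\<Sum>c\<in>I. B c a * A c b) = (\<Sum>c\<in>I. A b c * B c a)"
    using sym b by (intro sum.cong) (auto simp: mult.commute)
  also have "\<dots> = (if a = b then 1 else 0)" using AB a b unfolding right_inverse_on_def by auto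
  finally show "(\<Sum>c\<in>I. B c a * A c b) = (if a = b then 1 else 0)" .
qed

lemma inv_on_eqI:
  assumes fin: "finite I" and AX: "right_inverse_on I A X" and LA: "right_inverse_on I L A"
  shows "inv_on I A = sub_on I X"
  unfolding inv_on_def
proof (rule the_equality)
  show "(\<forall>a b. a \<notin> I \<or> b \<notin> I \<longrightarrow> sub_on I X a b = 0) \<and>
      (\<forall>a\<in>I. \<forall>b\<in>I. (\<Sum>c\<in>I. A a c * sub_on I X c b) = (if a = b then 1 else 0))"
    using AX unfolding right_inverse_on_def sub_on_def by (auto cong: sum.cong)
next
  fix B assume B: "(\<forall>a b. a \<notin> I \<or> b \<notin> I \<longrightarrow> B a b = 0) \<and>
      (\<forall>a\<in>I. \<forall>b\<in>I. (\<Sum>c\<in>I. A a c * B c b) = (if a = b then 1 else 0))"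
  then have "right_inverse_on I A B" unfolding right_inverse_on_def by blast
  then have "\<And>a b. a \<in> I \<Longrightarrow> b \<in> I \<Longrightarrow> B a b = X a b"
    using right_inverse_eq_left_inverse[OF fin _ LA] AX by metis
  then show "B = sub_on I X" using B unfolding sub_on_def by (intro ext) auto
qed

lemma right_inverse_symmetric:
  assumes fin: "finite I" and sym: "\<forall>a\<in>I. \<forall>b\<in>I. A a b = A b a"
    and AP: "right_inverse_on I A P" and a: "a \<in> I" and b: "b \<in> I"
  shows "P a b = P b a"
  using right_inverse_eq_left_inverse[OF fin AP right_inverse_transpose[OF sym AP] a b] .

lemma right_inverse_swap:
  assumes "\<forall>a\<in>I. \<forall>b\<in>I. A a b = A b a" and "\<forall>a\<in>I. \<forall>b\<in>I. B a b = B b a"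
    and "right_inverse_on I A B"
  shows "right_inverse_on I B A"
  using right_inverse_transpose[OF assms(1,3)] right_inverse_on_cong[of I "\<lambda>a b. B b a" B A A] assms(2)
  by simp

lemma inv_on_symmetric:
  assumes fin: "finite I" and "\<forall>a\<in>I. \<forall>b\<in>I. A a b = A b a" and "\<forall>a\<in>I. \<forall>b\<in>I. X a b = X b a"
    and AX: "right_inverse_on I A X"
  shows "inv_on I A = sub_on I X"
  using inv_on_eqI[OF fin AX right_inverse_swap[OF assms(2-4)]] .

lemma inverse_of_block_of_inverse:
  assumes fin: "finite D" and I: "I \<subseteq> D" and pd: "pos_def_on D K"
    and KP: "right_inverse_on D K P"
    and symS: "\<forall>a\<in>I. \<forall>b\<in>I. S a b = S b a" and SP: "right_inverse_on I S P"
    and a: "a \<in> I" and b: "b \<in> I"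
  shows "S a b = inv_on I (sub_on I (inv_on D K)) a b"
proof -
  have symK: "\<forall>a\<in>D. \<forall>b\<in>D. K a b = K b a" using pd unfolding pos_def_on_def by blast
  have symP: "\<forall>a\<in>D. \<forall>b\<in>D. P a b = P b a" using right_inverse_symmetric[OF fin symK KP] by blast
  have "sub_on I (inv_on D K) = sub_on I P"
    using inv_on_symmetric[OF fin symK symP KP] I by (auto simp: sub_on_def fun_eq_iff)
  moreover have symPI: "\<forall>a\<in>I. \<forall>b\<in>I. sub_on I P a b = sub_on I P b a"
    using symP I unfolding sub_on_def by auto
  moreover have "right_inverse_on I (sub_on I P) S"
    using right_inverse_swap[OF symS symPI] SP right_inverse_on_cong[of I S S P "sub_on I P"]
    unfolding sub_on_def by simp
  ultimately have "inv_on I (sub_on I (inv_on D K)) = sub_on I S"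
    using inv_on_symmetric[OF finite_subset[OF I fin] symPI symS] by simp
  then show ?thesis using a b unfolding sub_on_def by simp
qed

lemma pos_def_diag_pos:
  assumes fin: "finite V" and pd: "pos_def_on V A" and d: "d \<in> V"
  shows "A d d > 0"
proof -
  define x where "x = (\<lambda>v. if v = d then 1 else (0::real))"
  have "quad_form V A x > 0"
    using pd d unfolding pos_def_on_iff by (metis x_def zero_neq_one)
  moreover have "quad_form V A x = A d d"
    using fin d by (simp add: quad_form_def x_def sum.remove[of V d])
  ultimately show ?thesis by simp
qed

lemma quad_form_insert:
  assumes fin: "finite W" and d: "d \<notin> W"
  shows "quad_form (insert d W) A (x(d := t)) =
    A d d * t * t + t * (\<Sum>b\<in>W. A d b * x b) + (\<Sum>a\<in>W. x a * A a d) * t + quad_form W A x"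
proof -
  have xW: "\<And>v. v \<in> W \<Longrightarrow> (x(d := t)) v = x v" using d by auto
  have "quad_form (insert d W) A (x(d := t)) =
      (\<Sum>b\<in>insert d W. t * A d b * (x(d := t)) b) +
      (\<Sum>a\<in>W. \<Sum>b\<in>insert d W. x a * A a b * (x(d := t)) b)"
    using fin d xW unfolding quad_form_def by (simp cong: sum.cong)
  also have "(\<Sum>b\<in>insert d W. t * A d b * (x(d := t)) b) = A d d * t * t + t * (\<Sum>b\<in>W. A d b * x b)"
    using fin d xW by (simp add: sum_distrib_left mult.assoc cong: sum.cong)
  also have "(\<Sum>a\<in>W. \<Sum>b\<in>insert d W. x a * A a b * (x(d := t)) b) =
      (\<Sum>a\<in>W. x a * A a d * t + (\<Sum>b\<in>W. x a * A a b * x b))"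
    using fin d xW by (intro sum.cong) auto
  also have "\<dots> = (\<Sum>a\<in>W. x a * A a d) * t + quad_form W A x"
    by (simp add: sum.distrib sum_distrib_right quad_form_def)
  finally show ?thesis by linarith
qed

lemma quad_form_schur:
  "quad_form W (schur d A) x =
    quad_form W A x - (\<Sum>a\<in>W. x a * A a d) * (\<Sum>b\<in>W. A d b * x b) / A d d"
proof -
  have "quad_form W (schur d A) x =
      quad_form W A x - (\<Sum>a\<in>W. \<Sum>b\<in>W. (x a * A a d) * (A d b * x b)) / A d d"
    unfolding schur_def quad_form_def
    by (simp add: algebra_simps sum_subtractf sum_divide_distrib sum.distrib)
  then show ?thesis by (simp add: sum_product)
qed

(* Eliminating a pivot preserves positive definiteness: the Schur form is the original
   form minimised over the pivot coordinate (completing the square). *)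
lemma pos_def_schur:
  assumes fin: "finite W" and d: "d \<notin> W" and pd: "pos_def_on (insert d W) A"
  shows "pos_def_on W (schur d A)"
  unfolding pos_def_on_iff
proof (intro conjI allI impI ballI)
  have sym: "\<And>a b. a \<in> insert d W \<Longrightarrow> b \<in> insert d W \<Longrightarrow> A a b = A b a"
    using pd unfolding pos_def_on_iff by blast
  then show "schur d A a b = schur d A b a" if "a \<in> W" "b \<in> W" for a b
    using that unfolding schur_def by (simp add: mult.commute)
  fix x :: "'a \<Rightarrow> real"
  assume xW: "\<forall>v. v \<notin> W \<longrightarrow> x v = 0" and xnz: "\<exists>v. x v \<noteq> 0"
  define u where "u = (\<Sum>b\<in>W. A d b * x b)"
  have u': "(\<Sum>a\<in>W. x a * A a d) = u"
    unfolding u_def using sym by (intro sum.cong) (auto simp: mult.commute)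
  have Add: "A d d > 0" using pos_def_diag_pos[OF _ pd] fin by simp
  define t where "t = - u / A d d"
  have "\<forall>v. v \<notin> insert d W \<longrightarrow> (x(d := t)) v = 0" using xW by simp
  moreover have "\<exists>v. (x(d := t)) v \<noteq> 0" using xnz xW d by (metis fun_upd_other)
  ultimately have "quad_form (insert d W) A (x(d := t)) > 0"
    using pd unfolding pos_def_on_iff by blast
  also have "quad_form (insert d W) A (x(d := t)) = A d d * t * t + 2 * t * u + quad_form W A x"
    unfolding quad_form_insert[OF fin d] u' u_def[symmetric] by simp
  also have "\<dots> = quad_form W A x - u * u / A d d"
    using Add unfolding t_def by (simp add: field_simps power2_eq_square)
  also have "\<dots> = quad_form W (schur d A) x"
    unfolding quad_form_schur u' u_def[symmetric] ..
  finally show "quad_form W (schur d A) x > 0" .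
qed

lemma right_inverse_schur:
  assumes fin: "finite V" and d: "d \<in> V" and Add: "A d d \<noteq> 0"
    and AP: "right_inverse_on V A P"
  shows "right_inverse_on (V - {d}) (schur d A) P"
  unfolding right_inverse_on_def
proof (intro ballI)
  fix a b assume a: "a \<in> V - {d}" and b: "b \<in> V - {d}"
  have split: "(\<Sum>c\<in>V. F c) = F d + (\<Sum>c\<in>V - {d}. F c)" for F :: "'a \<Rightarrow> real"
    using fin d by (simp add: sum.remove)
  have row_a: "A a d * P d b + (\<Sum>c\<in>V - {d}. A a c * P c b) = (if a = b then 1 else 0)"
    using AP a b split[of "\<lambda>c. A a c * P c b"] unfolding right_inverse_on_def by auto
  have row_d: "A d d * P d b + (\<Sum>c\<in>V - {d}. A d c * P c b) = 0"
    using AP d b split[of "\<lambda>c. A d c * P c b"] unfolding right_inverse_on_def by auto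
  have "(\<Sum>c\<in>V - {d}. schur d A a c * P c b) =
      (\<Sum>c\<in>V - {d}. A a c * P c b) - A a d / A d d * (\<Sum>c\<in>V - {d}. A d c * P c b)"
    unfolding schur_def by (simp add: algebra_simps sum_subtractf sum_distrib_left sum_divide_distrib)
  also have "\<dots> = (\<Sum>c\<in>V - {d}. A a c * P c b) + A a d * P d b"
  proof -
    have "(\<Sum>c\<in>V - {d}. A d c * P c b) = - (A d d * P d b)" using row_d by linarith
    then show ?thesis using Add by simp
  qed
  also have "\<dots> = (if a = b then 1 else 0)"
    using row_a by simp
  finally show "(\<Sum>c\<in>V - {d}. schur d A a c * P c b) = (if a = b then 1 else 0)" .
qed

lemma right_inverse_solves:
  assumes fin: "finite V" and AT: "right_inverse_on V A T" and a: "a \<in> V"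
  shows "(\<Sum>c\<in>V. A a c * (\<Sum>e\<in>V. T c e * r e)) = r a"
proof -
  have "(\<Sum>c\<in>V. A a c * (\<Sum>e\<in>V. T c e * r e)) = (\<Sum>e\<in>V. (\<Sum>c\<in>V. A a c * T c e) * r e)"
    by (rule sum_product_assoc)
  also have "\<dots> = (\<Sum>e\<in>V. (if a = e then 1 else 0) * r e)"
    using AT a unfolding right_inverse_on_def by (intro sum.cong) auto
  also have "\<dots> = r a" using sum_kronecker_left[OF fin a] .
  finally show ?thesis .
qed

lemma schur_back_substitution:
  assumes fin: "finite W" and d: "d \<notin> W" and Add: "A d d \<noteq> 0"
    and sol: "\<forall>a\<in>W. (\<Sum>c\<in>W. schur d A a c * x c) = r a - A a d * r d / A d d"
    and pivot: "x d = (r d - (\<Sum>c\<in>W. A d c * x c)) / A d d"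
    and a: "a \<in> insert d W"
  shows "(\<Sum>c\<in>insert d W. A a c * x c) = r a"
proof -
  define S where "S = (\<Sum>c\<in>W. A d c * x c)"
  have split: "(\<Sum>c\<in>insert d W. A a c * x c) = A a d * x d + (\<Sum>c\<in>W. A a c * x c)"
    using fin d by simp
  show ?thesis
  proof (cases "a = d")
    case True
    then have "(\<Sum>c\<in>insert d W. A a c * x c) = A d d * x d + S"
      using split unfolding S_def by simp
    also have "\<dots> = r d" using pivot[folded S_def] Add by (simp add: field_simps)
    finally show ?thesis using True by simp
  next
    case False
    then have aW: "a \<in> W" using a by simp
    have "(\<Sum>c\<in>W. schur d A a c * x c) = (\<Sum>c\<in>W. A a c * x c) - A a d / A d d * S"
      unfolding schur_def S_def
      by (simp add: algebra_simps sum_subtractf sum_distrib_left sum_divide_distrib)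
    then have "(\<Sum>c\<in>W. A a c * x c) = r a - A a d * r d / A d d + A a d / A d d * S"
      using sol aW by simp
    then show ?thesis using split pivot Add unfolding S_def[symmetric] by (simp add: field_simps)
  qed
qed

(* Every positive definite matrix is invertible, by induction on the index set:
   invert the Schur complement and back-substitute column by column. *)
lemma pos_def_right_inverse_exists:
  assumes "finite V" and "pos_def_on V A"
  shows "\<exists>P. right_inverse_on V A P"
  using assms
proof (induction V arbitrary: A rule: finite_induct)
  case empty
  then show ?case by (simp add: right_inverse_on_def)
next
  case (insert d W A)
  have "A d d > 0" by (rule pos_def_diag_pos[OF _ insert.prems]) (use insert.hyps in auto)
  then have Add: "A d d \<noteq> 0" by simp
  obtain T where T: "right_inverse_on W (schur d A) T"
    using insert.IH[OF pos_def_schur[OF insert.hyps(1,2) insert.prems]] by blast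
  (* column b of the inverse solves A x = unit b: solve the reduced system with T,
     then recover the pivot coordinate *)
  define unit where "unit b = (\<lambda>e. if e = b then 1 else (0::real))" for b :: 'a
  define y where "y b c = (\<Sum>e\<in>W. T c e * (unit b e - A e d * unit b d / A d d))" for b c
  define P where "P c b = (if c = d then (unit b d - (\<Sum>c'\<in>W. A d c' * y b c')) / A d d else y b c)"
    for c b
  have "(\<Sum>c\<in>insert d W. A a c * P c b) = unit b a" if a: "a \<in> insert d W" for a b
  proof (rule schur_back_substitution[where A = A and d = d and x = "\<lambda>c. P c b" and r = "unit b",
        OF insert.hyps(1,2) Add _ _ a])
    have Py: "\<And>c. c \<in> W \<Longrightarrow> P c b = y b c" using insert.hyps(2) unfolding P_def by auto
    show "\<forall>a\<in>W. (\<Sum>c\<in>W. schur d A a c * P c b) = unit b a - A a d * unit b d / A d d"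
      using right_inverse_solves[OF insert.hyps(1) T] Py unfolding y_def by (simp cong: sum.cong)
    show "P d b = (unit b d - (\<Sum>c\<in>W. A d c * P c b)) / A d d"
      using Py unfolding P_def by (simp cong: sum.cong)
  qed
  then show ?case unfolding right_inverse_on_def unit_def by blast
qed

definition zero_pattern :: "'v set \<Rightarrow> 'v set set \<Rightarrow> 'v mat \<Rightarrow> bool" where
  "zero_pattern V Es A \<longleftrightarrow> (\<forall>a\<in>V. \<forall>b\<in>V. a \<noteq> b \<and> \<not> adj Es a b \<longrightarrow> A a b = 0)"

lemma adj_sym: "adj E a b = adj E b a"
  unfolding adj_def by (simp add: insert_commute)

lemma elim_step_eq_schur:
  assumes "\<forall>a\<in>W. a \<notin> Q \<longrightarrow> A a d = 0 \<and> A d a = 0" and "a \<in> W" and "b \<in> W"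
  shows "elim_step Q d A a b = schur d A a b"
  using assms unfolding elim_step_def schur_def by auto

lemma zero_pattern_schur:
  assumes pat: "zero_pattern (insert d W) Es A"
    and outside: "\<forall>a\<in>W. a \<notin> Q \<longrightarrow> A a d = 0 \<and> A d a = 0"
    and Q: "\<forall>a\<in>Q. \<forall>b\<in>Q. a \<noteq> b \<longrightarrow> adj Es a b"
  shows "zero_pattern W Es (schur d A)"
  unfolding zero_pattern_def
proof (intro ballI impI)
  fix a b assume a: "a \<in> W" and b: "b \<in> W" and ab: "a \<noteq> b \<and> \<not> adj Es a b"
  then have "A a b = 0" using pat unfolding zero_pattern_def by blast
  moreover have "A a d = 0 \<or> A d b = 0" using outside Q a b ab by blast
  ultimately show "schur d A a b = 0" unfolding schur_def by auto
qed

lemma clique_in_maximal_clique: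
  assumes "finite D" and "clique D Es X"
  shows "\<exists>M. maximal_clique D Es M \<and> X \<subseteq> M"
proof -
  let ?A = "{Y. clique D Es Y \<and> X \<subseteq> Y}"
  have "?A \<subseteq> Pow D" unfolding clique_def by auto
  then have "finite ?A" using assms(1) finite_subset by blast
  moreover have "X \<in> ?A" using assms(2) by simp
  ultimately obtain M where M: "M \<in> ?A" "\<forall>Y\<in>?A. M \<subseteq> Y \<longrightarrow> M = Y"
    by (meson finite_has_maximal2)
  then have "maximal_clique D Es M" unfolding maximal_clique_def by auto
  then show ?thesis using M(1) by blast
qed

(* Each later clique containing both
   passes them on to an earlier one, until index m is reached. *)
lemma perfect_sequence_descent:
  assumes perf: "perfect_sequence D Es Cs"
    and d_first: "d \<in> Cs ! m" "\<forall>j<m. d \<notin> Cs ! j"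
    and a_early: "k \<le> m" "a \<in> Cs ! k"
    and j: "j < length Cs" "a \<in> Cs ! j" "d \<in> Cs ! j"
  shows "a \<in> Cs ! m"
  using j
proof (induction j rule: less_induct)
  case (less j)
  have "m \<le> j" using d_first(2) less.prems(3) by (meson not_less)
  show ?case
  proof (cases "j = m")
    case True
    then show ?thesis using less.prems by simp
  next
    case False
    then have mj: "m < j" using \<open>m \<le> j\<close> by simp
    have earlier: "a \<in> (\<Union>i<j. Cs ! i)" "d \<in> (\<Union>i<j. Cs ! i)"
      using a_early d_first(1) mj by auto
    have "1 \<le> j" using mj by simp
    then obtain j' where j': "j' < j" "Cs ! j \<inter> (\<Union>i<j. Cs ! i) \<subseteq> Cs ! j'"
      using perf less.prems(1) unfolding perfect_sequence_def by blast
    then show ?thesis using less.IH[of j'] less.prems earlier by auto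
  qed
qed

locale elimination_ordering =
  fixes D :: "'v set" and Es :: "'v set set" and C :: "'v set"
    and Cs :: "'v set list" and ds :: "'v list"
  assumes finite_D: "finite D"
    and perfect: "perfect_sequence D Es Cs"
    and C_first: "C \<subseteq> Cs ! 0" and C_sub: "C \<subseteq> D"
    and ds_distinct: "distinct ds" and ds_set: "set ds = D - C"
    and ds_order: "\<forall>i j. i < j \<and> j < length ds \<longrightarrow> res_idx C Cs (ds ! j) \<le> res_idx C Cs (ds ! i)"
begin

definition remaining :: "nat \<Rightarrow> 'v set" where
  "remaining i = D - set (take i ds)"

lemma finite_remaining: "finite (remaining i)"
  using finite_D unfolding remaining_def by simp

lemma remaining_final: "remaining (length ds) = C"
  using ds_set C_sub unfolding remaining_def by auto

lemma nth_in_remaining: "i < length ds \<Longrightarrow> ds ! i \<in> remaining i"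
  using ds_distinct ds_set nth_mem[of i ds] unfolding remaining_def
  by (auto simp: in_set_conv_nth nth_eq_iff_index_eq)

lemma remaining_Suc: "i < length ds \<Longrightarrow> remaining i = insert (ds ! i) (remaining (Suc i))"
  using nth_in_remaining[of i] unfolding remaining_def by (auto simp: take_Suc_conv_app_nth)

lemma nth_notin_remaining_Suc: "i < length ds \<Longrightarrow> ds ! i \<notin> remaining (Suc i)"
  unfolding remaining_def by (simp add: take_Suc_conv_app_nth)

lemma Cs_clique:
  assumes "j < length Cs" "a \<in> Cs ! j" "b \<in> Cs ! j" "a \<noteq> b"
  shows "adj Es a b"
  using perfect assms nth_mem unfolding perfect_sequence_def maximal_clique_def clique_def by blast

lemma clique_covered:
  assumes "clique D Es X"
  shows "\<exists>j<length Cs. X \<subseteq> Cs ! j"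
  using clique_in_maximal_clique[OF finite_D assms] perfect
  unfolding perfect_sequence_def by (metis in_set_conv_nth mem_Collect_eq)

lemma res_idx_first:
  assumes v: "v \<in> D - C"
  shows "res_idx C Cs v < length Cs \<and> v \<in> Cs ! res_idx C Cs v \<and> (\<forall>j < res_idx C Cs v. v \<notin> Cs ! j)"
proof -
  have "clique D Es {v}" using v unfolding clique_def by auto
  then obtain j where j: "j < length Cs" "v \<in> Cs ! j" using clique_covered by blast
  define m where "m = (LEAST j. j < length Cs \<and> v \<in> Cs ! j)"
  have m: "m < length Cs" "v \<in> Cs ! m"
    using LeastI[of "\<lambda>j. j < length Cs \<and> v \<in> Cs ! j", OF conjI[OF j]] unfolding m_def by auto
  have before: "\<forall>j<m. v \<notin> Cs ! j"
    using m not_less_Least[of _ "\<lambda>j. j < length Cs \<and> v \<in> Cs ! j"] unfolding m_def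
    by (meson order.strict_trans)
  have res: "\<And>k. k < length Cs \<Longrightarrow> v \<in> res_set C Cs k \<longleftrightarrow> v \<in> Cs ! k \<and> (\<forall>j<k. v \<notin> Cs ! j)"
    using v unfolding res_set_def sep_set_def by auto
  have "res_idx C Cs v = m" unfolding res_idx_def
  proof (rule the_equality)
    show "m < length Cs \<and> v \<in> res_set C Cs m" using m before res by blast
  next
    fix k assume "k < length Cs \<and> v \<in> res_set C Cs k"
    then show "k = m" using res m before by (meson linorder_neqE_nat)
  qed
  then show ?thesis using m before by simp
qed

lemma later_vertex_early_clique:
  assumes i: "i < length ds" and a: "a \<in> remaining (Suc i)"
  shows "\<exists>k\<le>res_idx C Cs (ds ! i). a \<in> Cs ! k"
proof (cases "a \<in> C")
  case True
  then show ?thesis using C_first by blast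
next
  case False
  then obtain k where k: "k < length ds" "ds ! k = a"
    using a ds_set unfolding remaining_def by (metis DiffD1 DiffI in_set_conv_nth)
  have "\<not> k < Suc i"
    using a k unfolding remaining_def by (auto simp: in_set_conv_nth)
  then have "i < k" by simp
  then have "res_idx C Cs a \<le> res_idx C Cs (ds ! i)" using ds_order k by blast
  moreover have "a \<in> Cs ! res_idx C Cs a" using res_idx_first a False unfolding remaining_def by blast
  ultimately show ?thesis by blast
qed

lemma neighbour_in_pivot_clique:
  assumes i: "i < length ds" and a: "a \<in> remaining (Suc i)" and ad: "adj Es a (ds ! i)"
  shows "a \<in> Cs ! res_idx C Cs (ds ! i)"
proof -
  let ?d = "ds ! i" and ?m = "res_idx C Cs (ds ! i)"
  have dD: "?d \<in> D - C" using i ds_set nth_mem by blast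
  have aD: "a \<in> D" and ad': "a \<noteq> ?d"
    using a nth_notin_remaining_Suc[OF i] unfolding remaining_def by auto
  have "clique D Es {a, ?d}"
    using aD dD ad ad' adj_sym[of Es a ?d] unfolding clique_def by auto
  then obtain j where "j < length Cs" "a \<in> Cs ! j" "?d \<in> Cs ! j"
    using clique_covered by (meson insert_subset)
  moreover obtain k where "k \<le> ?m" "a \<in> Cs ! k" using later_vertex_early_clique[OF i a] by blast
  ultimately show ?thesis
    using perfect_sequence_descent[OF perfect] res_idx_first[OF dD] by blast
qed

(* The step is a genuine Schur complement because the
   pivot has no remaining neighbours outside C*_m. *)
lemma elimination_step_invariant:
  assumes i: "i < length ds"
    and pd: "pos_def_on (remaining i) A" and AP: "right_inverse_on (remaining i) A P"
    and pat: "zero_pattern (remaining i) Es A"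
    and A': "A' = elim_step (Cs ! res_idx C Cs (ds ! i) - set (take (Suc i) ds)) (ds ! i) A"
  shows "pos_def_on (remaining (Suc i)) A' \<and> right_inverse_on (remaining (Suc i)) A' P \<and>
    zero_pattern (remaining (Suc i)) Es A'"
proof -
  define d where "d = ds ! i"
  define W where "W = remaining (Suc i)"
  define Q where "Q = Cs ! res_idx C Cs d - set (take (Suc i) ds)"
  have V: "remaining i = insert d W" and dW: "d \<notin> W"
    using remaining_Suc[OF i] nth_notin_remaining_Suc[OF i] unfolding d_def W_def by auto
  have outside: "\<forall>a\<in>W. a \<notin> Q \<longrightarrow> A a d = 0 \<and> A d a = 0"
  proof (intro ballI impI)
    fix a assume a: "a \<in> W" and aQ: "a \<notin> Q"
    have "a \<notin> set (take (Suc i) ds)" using a unfolding W_def remaining_def by blast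
    then have "\<not> adj Es a d" using neighbour_in_pivot_clique[OF i] a aQ unfolding W_def Q_def d_def by blast
    then show "A a d = 0 \<and> A d a = 0"
      using pat a dW unfolding V zero_pattern_def by (metis adj_sym insertCI)
  qed
  have agree: "\<forall>a\<in>W. \<forall>b\<in>W. A' a b = schur d A a b"
    using elim_step_eq_schur[OF outside] unfolding A' Q_def d_def by blast
  have Add: "A d d > 0" using pos_def_diag_pos[OF finite_remaining pd] V by simp
  have "pos_def_on W A'"
    using pos_def_on_cong[OF agree] pos_def_schur[OF _ dW] pd finite_remaining V unfolding W_def by simp
  moreover have "right_inverse_on W A' P"
  proof -
    have "d \<in> remaining i" "A d d \<noteq> 0" using V Add by auto
    then have "right_inverse_on (remaining i - {d}) (schur d A) P"
      by (rule right_inverse_schur[OF finite_remaining _ _ AP])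
    moreover have "remaining i - {d} = W" using V dW by blast
    ultimately show ?thesis using right_inverse_on_cong[OF agree, of P P] by simp
  qed
  moreover have "zero_pattern W Es A'"
  proof -
    have "\<forall>a\<in>Q. \<forall>b\<in>Q. a \<noteq> b \<longrightarrow> adj Es a b"
      using Cs_clique res_idx_first i ds_set nth_mem unfolding Q_def d_def by blast
    then have "zero_pattern W Es (schur d A)" using zero_pattern_schur pat outside V by metis
    then show ?thesis using agree unfolding zero_pattern_def by simp
  qed
  ultimately show ?thesis unfolding W_def by blast
qed

lemma elimination_invariant:
  assumes pd: "pos_def_on D K" and pat: "zero_pattern D Es K" and KP: "right_inverse_on D K P"
    and Ks0: "Ks 0 = K"
    and KsSuc: "\<forall>i < length ds. Ks (Suc i) =
        elim_step (Cs ! res_idx C Cs (ds ! i) - set (take (Suc i) ds)) (ds ! i) (Ks i)"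
  shows "i \<le> length ds \<Longrightarrow> pos_def_on (remaining i) (Ks i) \<and>
    right_inverse_on (remaining i) (Ks i) P \<and> zero_pattern (remaining i) Es (Ks i)"
proof (induction i)
  case 0
  then show ?case using pd pat KP Ks0 unfolding remaining_def by simp
next
  case (Suc i)
  then have i: "i < length ds" by simp
  then show ?case
    using Suc.IH elimination_step_invariant[OF i _ _ _ KsSuc[rule_format, OF i]] by auto
qed

end

theorem mainTheorem1:
  fixes D :: "'v set" and E Es :: "'v set set" and K :: "'v mat" and C :: "'v set"
    and Cs :: "'v set list" and ds :: "'v list" and Ks :: "nat \<Rightarrow> 'v mat"
  assumes G: "graph D E" and conn: "connected_graph D E"
    and K: "K \<in> M_plus D E"
    and Cmax: "maximal_clique D E C"
    and ext: "chordal_extension D E Es"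
    and perf: "perfect_sequence D Es Cs"
    and C1: "Cs \<noteq> []" "C \<subseteq> Cs ! 0"
  assumes ds: "distinct ds" "set ds = D - C"
    and ds_order: "\<forall>i j. i < j \<and> j < length ds \<longrightarrow> res_idx C Cs (ds ! j) \<le> res_idx C Cs (ds ! i)"
    and Ks0: "Ks 0 = K"
    and KsSuc: "\<forall>i < length ds. Ks (Suc i) =
        elim_step (Cs ! res_idx C Cs (ds ! i) - set (take (Suc i) ds)) (ds ! i) (Ks i)"
  shows "(\<forall>i < length ds. Ks i (ds ! i) (ds ! i) > 0) \<and>
         (\<forall>a\<in>C. \<forall>b\<in>C. Ks (length ds) a b = inv_on C (sub_on C (inv_on D K)) a b)"
proof -
  have finD: "finite D" and CD: "C \<subseteq> D"
    using G Cmax unfolding graph_def maximal_clique_def clique_def by auto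
  have pdK: "pos_def_on D K" using K unfolding M_plus_def by blast
  have patK: "zero_pattern D Es K"
    using K ext unfolding M_plus_def chordal_extension_def zero_pattern_def adj_def by blast
  interpret elimination_ordering D Es C Cs ds
    using finD perf C1(2) CD ds ds_order by unfold_locales
  obtain P where KP: "right_inverse_on D K P" using pos_def_right_inverse_exists[OF finD pdK] by blast
  note invariant = elimination_invariant[OF pdK patK KP Ks0 KsSuc]
  have pivots: "\<forall>i < length ds. Ks i (ds ! i) (ds ! i) > 0"
  proof (intro allI impI)
    fix i assume i: "i < length ds"
    then show "Ks i (ds ! i) (ds ! i) > 0"
      using invariant[of i] pos_def_diag_pos[OF finite_remaining _ nth_in_remaining[OF i]] by simp
  qed
  have "pos_def_on C (Ks (length ds))" and "right_inverse_on C (Ks (length ds)) P"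
    using invariant[of "length ds"] remaining_final by auto
  then show ?thesis
    using pivots inverse_of_block_of_inverse[OF finD CD pdK KP] unfolding pos_def_on_def by blast
qed

end
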